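(* Fix $D,\alpha,\theta>0$. Let $G=(V,E)$ be a finite connected graph on $n$ vertices satisfying (bal), (mix), (esc) with parameters $D,\alpha,\theta$, with $n$ sufficiently large (depending only on $D,\alpha,\theta$). Let $\chi>0$ and let $W\subseteq V$ be a nonempty vertex set with $\mathrm{Cap}_r(W)\ge\chi r/\sqrt n$. Then $$\mathcal B_W(G)\le\theta+2D+\frac{36D}{\chi^2}.$$
   Context: $d(v)$ is the degree of $v$, $\delta(G),\Delta(G)$ the minimum and maximum degrees. The lazy random walk $(X_t)$ on $G$ at each step stays put with probability $1/2$ and otherwise moves along a uniformly chosen edge incident to the current vertex; $\Pr_\mu$ denotes its law with $X_0\sim\mu$. Write $\mathbf p^t(u,v)=\Pr_u(X_t=v)$ and $\pi(v)=d(v)/(2|E|)$. The uniform mixing time is $t_{\mathrm{mix}}(G)=\min\{t\ge0:\max_{u,v\in V}|\mathbf p^t(u,v)/\pi(v)-1|\le 1/2\}$, and the bubble sum is $\mathcal B(G)=\sum_{t=0}^{t_{\mathrm{mix}}(G)}(t+1)\sup_{v}\mathbf p^t(v,v)$. Assumptions with parameters $D,\alpha,\theta>0$: (bal) $\Delta(G)/\delta(G)\le D$; (mix) $t_{\mathrm{mix}}(G)\le n^{1/2-\alpha}$; (esc) $\mathcal B(G)\le\theta$. The run time is $r=n^{1/2-\alpha/3}$ (rounded). For nonempty $U\subseteq V$, $\tau_U=\min\{t\ge0:X_t\in U\}$ and $\mathrm{Cap}_r(U)=\Pr_\pi(\tau_U<r)$. $\mathbf p_W^t(u,v)=\Pr(X_t=v\text{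 and }\{X_0,\dots,X_t\}\cap W=\varnothing\mid X_0=u)$ and the $W$-bubble sum is $\mathcal B_W(G)=\sum_{t=0}^\infty(t+1)\sup_{v\in V}\mathbf p_W^t(v,v)$. *)

theory Defs
  imports "HOL-Analysis.Analysis"
begin

definition simple_graph :: "'a set \<Rightarrow> ('a \<Rightarrow> 'a \<Rightarrow> bool) \<Rightarrow> bool" where
  "simple_graph V E \<longleftrightarrow> finite V \<and> V \<noteq> {} \<and>
     (\<forall>x y. E x y \<longrightarrow> x \<in> V \<and> y \<in> V) \<and>
     (\<forall>x y. E x y \<longrightarrow> E y x) \<and> (\<forall>x. \<not> E x x)"

definition connected_graph :: "'a set \<Rightarrow> ('a \<Rightarrow> 'a \<Rightarrow> bool) \<Rightarrow> bool" where
  "connected_graph V E \<longleftrightarrow> (\<forall>u\<in>V. \<forall>v\<in>V. E\<^sup>*\<^sup>* u v)"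

definition deg :: "'a set \<Rightarrow> ('a \<Rightarrow> 'a \<Rightarrow> bool) \<Rightarrow> 'a \<Rightarrow> nat" where
  "deg V E v = card {u \<in> V. E v u}"

definition max_deg :: "'a set \<Rightarrow> ('a \<Rightarrow> 'a \<Rightarrow> bool) \<Rightarrow> nat" where
  "max_deg V E = Max (deg V E ` V)"

definition min_deg :: "'a set \<Rightarrow> ('a \<Rightarrow> 'a \<Rightarrow> bool) \<Rightarrow> nat" where
  "min_deg V E = Min (deg V E ` V)"

definition trans :: "'a set \<Rightarrow> ('a \<Rightarrow> 'a \<Rightarrow> bool) \<Rightarrow> 'a \<Rightarrow> 'a \<Rightarrow> real" where
  "trans V E u v = (if u = v then 1/2 else 0) + (if E u v then 1 / (2 * real (deg V E u)) else 0)"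

fun pt :: "'a set \<Rightarrow> ('a \<Rightarrow> 'a \<Rightarrow> bool) \<Rightarrow> nat \<Rightarrow> 'a \<Rightarrow> 'a \<Rightarrow> real" where
  "pt V E 0 u v = (if u = v then 1 else 0)"
| "pt V E (Suc t) u v = (\<Sum>w\<in>V. pt V E t u w * trans V E w v)"

text \<open>Stationary distribution pi(v) = d(v)/(2|E|); note 2|E| is the sum of degrees.\<close>
definition stat :: "'a set \<Rightarrow> ('a \<Rightarrow> 'a \<Rightarrow> bool) \<Rightarrow> 'a \<Rightarrow> real" where
  "stat V E v = real (deg V E v) / real (\<Sum>w\<in>V. deg V E w)"

definition tmix :: "'a set \<Rightarrow> ('a \<Rightarrow> 'a \<Rightarrow> bool) \<Rightarrow> nat" where
  "tmix V E = (LEAST t. \<forall>u\<in>V. \<forall>v\<in>V. \<bar>pt V E t u v / stat V E v - 1\<bar> \<le> 1/2)"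

definition bubble :: "'a set \<Rightarrow> ('a \<Rightarrow> 'a \<Rightarrow> bool) \<Rightarrow> real" where
  "bubble V E = (\<Sum>t = 0..tmix V E. real (t + 1) * Max ((\<lambda>v. pt V E t v v) ` V))"

text \<open>Killed kernel p_W^t(u,v) = Pr_u(X_t = v and X_0,...,X_t all outside W).\<close>
fun pk :: "'a set \<Rightarrow> ('a \<Rightarrow> 'a \<Rightarrow> bool) \<Rightarrow> 'a set \<Rightarrow> nat \<Rightarrow> 'a \<Rightarrow> 'a \<Rightarrow> real" where
  "pk V E W 0 u v = (if u = v \<and> u \<notin> W then 1 else 0)"
| "pk V E W (Suc t) u v = (if v \<in> W then 0 else (\<Sum>w\<in>V. pk V E W t u w * trans V E w v))"

text \<open>Pr_u(tau_U < r) = 1 - Pr_u(X_0,...,X_{r-1} all outside U).\<close>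
definition hit_before :: "'a set \<Rightarrow> ('a \<Rightarrow> 'a \<Rightarrow> bool) \<Rightarrow> 'a set \<Rightarrow> nat \<Rightarrow> 'a \<Rightarrow> real" where
  "hit_before V E U r u = (if r = 0 then 0 else 1 - (\<Sum>v\<in>V. pk V E U (r - 1) u v))"

definition Cap :: "'a set \<Rightarrow> ('a \<Rightarrow> 'a \<Rightarrow> bool) \<Rightarrow> nat \<Rightarrow> 'a set \<Rightarrow> real" where
  "Cap V E r U = (\<Sum>u\<in>V. stat V E u * hit_before V E U r u)"

definition bubbleW :: "'a set \<Rightarrow> ('a \<Rightarrow> 'a \<Rightarrow> bool) \<Rightarrow> 'a set \<Rightarrow> ennreal" where
  "bubbleW V E W = (\<Sum>t. ennreal (real (t + 1) * Max ((\<lambda>v. pk V E W t v v) ` V)))"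

definition run_time :: "nat \<Rightarrow> real \<Rightarrow> nat" where
  "run_time n \<alpha> = nat (round (real n powr (1/2 - \<alpha>/3)))"

end

theory Submission
  imports Defs
begin

text \<open>
  Write T for the mixing time, B = T + r and \<rho> = 1 - Cap_r(W)/2. After T steps the walk from any
  vertex dominates \<pi>/2, so it hits W within the next r steps with probability at least
  Cap_r(W)/2; iterating over blocks of length B, the walk avoids W up to time k with probability
  at most \<rho>^(k div B). Splitting a loop of length k + T at time k gives
  p_W^(k+T)(v,v) \<le> 3/2 \<pi>(v) \<rho>^(k div B) \<le> 3D/(2n) \<rho>^(k div B). The terms of the W-bubble sum
  up to time T are dominated by the bubble sum of G, and the remaining ones sum to at most
  3D/(2n) B^2 (4/Cap_r(W)^2 + 2/Cap_r(W)), which Cap_r(W) \<ge> \<chi> r/\<surd>n and T \<le> r \<le> \<surd>n/12 turn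
  into 2D + 36D/\<chi>^2. That the mixing time exists at all follows from a Doeblin contraction argument.
\<close>

lemma Doeblin_step:
  fixes p q g :: "'a \<Rightarrow> real"
  assumes p1: "sum p S = 1" and q1: "sum q S = 1"
    and p\<epsilon>: "\<And>w. w \<in> S \<Longrightarrow> \<epsilon> \<le> p w" and q\<epsilon>: "\<And>w. w \<in> S \<Longrightarrow> \<epsilon> \<le> q w"
    and g: "\<And>w. w \<in> S \<Longrightarrow> a \<le> g w \<and> g w \<le> b"
  shows "(\<Sum>w\<in>S. p w * g w) - (\<Sum>w\<in>S. q w * g w) \<le> (1 - real (card S) * \<epsilon>) * (b - a)"
proof -
  have split: "(\<Sum>w\<in>S. f w * g w) = (\<Sum>w\<in>S. (f w - \<epsilon>) * g w) + \<epsilon> * sum g S" for f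
    by (simp add: sum_distrib_left sum.distrib[symmetric] algebra_simps)
  have excess: "(\<Sum>w\<in>S. (f w - \<epsilon>) * c) = (1 - real (card S) * \<epsilon>) * c" if "sum f S = 1" for f c
    using that by (simp add: sum_distrib_right[symmetric] sum_subtractf)
  have "(\<Sum>w\<in>S. (p w - \<epsilon>) * g w) \<le> (\<Sum>w\<in>S. (p w - \<epsilon>) * b)"
    using p\<epsilon> g by (intro sum_mono mult_left_mono) auto
  moreover have "(\<Sum>w\<in>S. (q w - \<epsilon>) * a) \<le> (\<Sum>w\<in>S. (q w - \<epsilon>) * g w)"
    using q\<epsilon> g by (intro sum_mono mult_left_mono) auto
  ultimately show ?thesis
    unfolding split[of p] split[of q] excess[OF p1] excess[OF q1] by (simp add: algebra_simps)
qed

lemma sum_le_block_sum: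
  fixes h g :: "nat \<Rightarrow> real"
  assumes h_nonneg: "\<And>k. 0 \<le> h k" and h_le: "\<And>k. h k \<le> g (k div B)" and B: "0 < B"
  shows "(\<Sum>k<K. h k) \<le> real B * (\<Sum>j<K. g j)"
proof -
  have "(\<Sum>k<K. h k) \<le> (\<Sum>k<K * B. h k)"
    using B h_nonneg by (intro sum_mono2) auto
  also have "\<dots> = (\<Sum>j<K. \<Sum>k\<in>{j * B..<j * B + B}. h k)"
    by (rule sum.nat_group[symmetric])
  also have "\<dots> \<le> (\<Sum>j<K. \<Sum>k\<in>{j * B..<j * B + B}. g j)"
  proof (intro sum_mono)
    fix j k assume "k \<in> {j * B..<j * B + B}"
    then have "k div B = j" using B by (auto intro: div_nat_eqI simp: algebra_simps)
    then show "h k \<le> g j" using h_le[of k] by simp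
  qed
  also have "\<dots> = real B * (\<Sum>j<K. g j)" by (simp add: sum_distrib_left)
  finally show ?thesis .
qed

lemma sum_add_two_mult_power_le:
  fixes \<rho> :: real
  assumes "0 \<le> \<rho>" "\<rho> < 1"
  shows "(\<Sum>j<J. (real j + 2) * \<rho> ^ j) \<le> 1 / (1 - \<rho>)^2 + 1 / (1 - \<rho>)"
proof -
  have "(\<lambda>j. real (Suc j) * \<rho> ^ j + \<rho> ^ j) sums (1 / (1 - \<rho>)^2 + 1 / (1 - \<rho>))"
    using assms by (intro sums_add geometric_deriv_sums geometric_sums) auto
  then have sums: "(\<lambda>j. (real j + 2) * \<rho> ^ j) sums (1 / (1 - \<rho>)^2 + 1 / (1 - \<rho>))"
    by (simp add: algebra_simps)
  have "(\<Sum>j<J. (real j + 2) * \<rho> ^ j) \<le> (\<Sum>j. (real j + 2) * \<rho> ^ j)"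
    using sums_summable[OF sums] assms by (intro sum_le_suminf) auto
  then show ?thesis using sums_unique[OF sums] by simp
qed

lemma suminf_ennreal_le:
  fixes f :: "nat \<Rightarrow> real"
  assumes f_nonneg: "\<And>t. 0 \<le> f t" and partial: "\<And>K. (\<Sum>t<K. f t) \<le> M"
  shows "(\<Sum>t. ennreal (f t)) \<le> ennreal M"
proof -
  have f: "summable f" by (rule summableI_nonneg_bounded[OF f_nonneg partial])
  then have "(\<Sum>t. ennreal (f t)) = ennreal (\<Sum>t. f t)" by (rule suminf_ennreal2[OF f_nonneg])
  also have "\<dots> \<le> ennreal M" by (rule ennreal_leI) (rule suminf_le_const[OF f partial])
  finally show ?thesis .
qed

locale lazy_walk_graph =
  fixes V :: "'a set" and E :: "'a \<Rightarrow> 'a \<Rightarrow> bool"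
  assumes simple: "simple_graph V E"
    and connected: "connected_graph V E"
    and two_le_card: "2 \<le> card V"
begin

lemma finite_vertices: "finite V"
  using simple by (simp add: simple_graph_def)

lemma edge_vertices: "E x y \<Longrightarrow> x \<in> V \<and> y \<in> V"
  using simple by (simp add: simple_graph_def)

lemma edge_sym: "E x y \<Longrightarrow> E y x"
  using simple by (simp add: simple_graph_def)

lemma edge_irrefl: "\<not> E x x"
  using simple by (simp add: simple_graph_def)

lemma vertices_nonempty: "V \<noteq> {}"
  using two_le_card by auto

lemma ex_other_vertex:
  assumes "v \<in> V" shows "\<exists>u\<in>V. u \<noteq> v"
proof (rule ccontr)
  assume "\<not> ?thesis"
  then have "V \<subseteq> {v}" by auto
  then have "card V \<le> 1" using card_mono[of "{v}" V] by simp
  then show False using two_le_card by simp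
qed

lemma deg_pos:
  assumes v: "v \<in> V" shows "0 < deg V E v"
proof -
  obtain u where u: "u \<in> V" "u \<noteq> v" using ex_other_vertex[OF v] by blast
  have "E\<^sup>*\<^sup>* v u" using connected u v by (simp add: connected_graph_def)
  then obtain w where "E v w" using u(2) by (metis converse_rtranclpE)
  then have "w \<in> {u \<in> V. E v u}" using edge_vertices by auto
  moreover have "finite {u \<in> V. E v u}" using finite_vertices by simp
  ultimately show ?thesis unfolding deg_def using card_gt_0_iff by blast
qed

lemma trans_nonneg: "0 \<le> trans V E u v"
  by (simp add: trans_def)

lemma trans_outside: "w \<in> V \<Longrightarrow> v \<notin> V \<Longrightarrow> trans V E w v = 0"
  using edge_vertices unfolding trans_def by auto

lemma sum_trans:
  assumes u: "u \<in> V" shows "(\<Sum>v\<in>V. trans V E u v) = 1"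
proof -
  have "(\<Sum>v\<in>V. trans V E u v) = (\<Sum>v\<in>V. if u = v then 1/2 else 0)
      + (\<Sum>v\<in>V. if E u v then 1 / (2 * real (deg V E u)) else 0)"
    unfolding trans_def by (simp add: sum.distrib)
  also have "(\<Sum>v\<in>V. if u = v then 1/2 else 0::real) = 1/2"
    using u finite_vertices by simp
  also have "(\<Sum>v\<in>V. if E u v then 1 / (2 * real (deg V E u)) else 0)
      = real (deg V E u) * (1 / (2 * real (deg V E u)))"
    by (simp add: sum.If_cases finite_vertices deg_def Collect_conj_eq Int_commute)
  also have "\<dots> = 1/2" using deg_pos[OF u] by simp
  finally show ?thesis by simp
qed

lemma pt_nonneg: "0 \<le> pt V E t u v"
  by (induction t arbitrary: v) (auto intro!: sum_nonneg mult_nonneg_nonneg trans_nonneg)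

lemma pk_nonneg: "0 \<le> pk V E W t u v"
  by (induction t arbitrary: v) (auto intro!: sum_nonneg mult_nonneg_nonneg trans_nonneg)

lemma pt_outside: "u \<in> V \<Longrightarrow> v \<notin> V \<Longrightarrow> pt V E t u v = 0"
  by (cases t) (auto simp: trans_outside)

lemma pk_outside: "u \<in> V \<Longrightarrow> v \<notin> V \<Longrightarrow> pk V E W t u v = 0"
  by (cases t) (auto simp: trans_outside)

lemma pk_killed: "v \<in> W \<Longrightarrow> pk V E W t u v = 0"
  by (cases t) auto

lemma pk_le_pt: "pk V E W t u v \<le> pt V E t u v"
  by (induction t arbitrary: v)
    (auto intro!: sum_mono mult_right_mono trans_nonneg sum_nonneg mult_nonneg_nonneg pt_nonneg)

lemma sum_pt: "u \<in> V \<Longrightarrow> (\<Sum>v\<in>V. pt V E t u v) = 1"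
proof (induction t)
  case 0 then show ?case using finite_vertices by simp
next
  case (Suc t)
  have "(\<Sum>v\<in>V. pt V E (Suc t) u v) = (\<Sum>w\<in>V. pt V E t u w * (\<Sum>v\<in>V. trans V E w v))"
    by (simp add: sum_distrib_left) (rule sum.swap)
  also have "\<dots> = (\<Sum>w\<in>V. pt V E t u w)" by (simp add: sum_trans)
  finally show ?case using Suc by simp
qed

lemma pt_add: "u \<in> V \<Longrightarrow> pt V E (a + b) u v = (\<Sum>w\<in>V. pt V E a u w * pt V E b w v)"
proof (induction b arbitrary: v)
  case 0
  have "(\<Sum>w\<in>V. pt V E a u w * pt V E 0 w v) = (\<Sum>w\<in>V. if w = v then pt V E a u v else 0)"
    by (rule sum.cong) simp_all
  also have "\<dots> = (if v \<in> V then pt V E a u v else 0)" using finite_vertices by simp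
  also have "\<dots> = pt V E a u v" using pt_outside[OF 0] by simp
  finally show ?case by simp
next
  case (Suc b)
  have "pt V E (a + Suc b) u v = (\<Sum>x\<in>V. pt V E (a + b) u x * trans V E x v)"
    by simp
  also have "\<dots> = (\<Sum>x\<in>V. (\<Sum>w\<in>V. pt V E a u w * pt V E b w x) * trans V E x v)"
    using Suc by simp
  also have "\<dots> = (\<Sum>w\<in>V. pt V E a u w * (\<Sum>x\<in>V. pt V E b w x * trans V E x v))"
    by (simp add: sum_distrib_left sum_distrib_right mult.assoc) (rule sum.swap)
  finally show ?case by (simp only: pt.simps(2))
qed

lemma pk_add: "u \<in> V \<Longrightarrow> pk V E W (a + b) u v = (\<Sum>w\<in>V. pk V E W a u w * pk V E W b w v)"
proof (induction b arbitrary: v)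
  case 0
  have "(\<Sum>w\<in>V. pk V E W a u w * pk V E W 0 w v)
      = (\<Sum>w\<in>V. if w = v then (if v \<in> W then 0 else pk V E W a u v) else 0)"
    by (rule sum.cong) simp_all
  also have "\<dots> = (if v \<in> V then (if v \<in> W then 0 else pk V E W a u v) else 0)"
    using finite_vertices by simp
  also have "\<dots> = pk V E W a u v" using pk_outside[OF 0] pk_killed by simp
  finally show ?case by simp
next
  case (Suc b)
  show ?case
  proof (cases "v \<in> W")
    case False
    have "pk V E W (a + Suc b) u v = (\<Sum>x\<in>V. pk V E W (a + b) u x * trans V E x v)"
      using False by simp
    also have "\<dots> = (\<Sum>x\<in>V. (\<Sum>w\<in>V. pk V E W a u w * pk V E W b w x) * trans V E x v)"
      using Suc by simp
    also have "\<dots> = (\<Sum>w\<in>V. pk V E W a u w * (\<Sum>x\<in>V. pk V E W b w x * trans V E x v))"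
      by (simp add: sum_distrib_left sum_distrib_right mult.assoc) (rule sum.swap)
    finally show ?thesis by (simp only: pk.simps(2) False if_False)
  qed simp
qed

lemma sum_deg_pos: "0 < (\<Sum>w\<in>V. real (deg V E w))"
  using finite_vertices vertices_nonempty deg_pos by (intro sum_pos) auto

lemma stat_pos: "v \<in> V \<Longrightarrow> 0 < stat V E v"
  unfolding stat_def using sum_deg_pos deg_pos by simp

lemma stat_nonneg: "0 \<le> stat V E v"
  unfolding stat_def by (auto intro!: divide_nonneg_nonneg sum_nonneg)

lemma sum_stat: "(\<Sum>v\<in>V. stat V E v) = 1"
  unfolding stat_def using sum_deg_pos by (simp add: sum_divide_distrib[symmetric])

lemma stat_trans:
  assumes v: "v \<in> V" shows "(\<Sum>w\<in>V. stat V E w * trans V E w v) = stat V E v"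
proof -
  define S where "S = (\<Sum>w\<in>V. real (deg V E w))"
  have S: "0 < S" using sum_deg_pos S_def by simp
  have "(\<Sum>w\<in>V. stat V E w * trans V E w v)
      = (\<Sum>w\<in>V. if w = v then stat V E v / 2 else 0) + (\<Sum>w\<in>V. if E w v then 1 / (2 * S) else 0)"
    unfolding sum.distrib[symmetric]
  proof (rule sum.cong)
    fix w assume w: "w \<in> V"
    show "stat V E w * trans V E w v
        = (if w = v then stat V E v / 2 else 0) + (if E w v then 1 / (2 * S) else 0)"
      unfolding trans_def stat_def using deg_pos[OF w] S by (auto simp: S_def field_simps)
  qed simp
  also have "(\<Sum>w\<in>V. if w = v then stat V E v / 2 else 0) = stat V E v / 2"
    using v finite_vertices by simp
  also have "(\<Sum>w\<in>V. if E w v then 1 / (2 * S) else 0) = real (card {w\<in>V. E w v}) / (2 * S)"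
    by (simp add: sum.If_cases finite_vertices Collect_conj_eq Int_commute)
  also have "{w\<in>V. E w v} = {w\<in>V. E v w}" using edge_sym by blast
  also have "real (card {w\<in>V. E v w}) / (2 * S) = stat V E v / 2"
    unfolding stat_def S_def deg_def by simp
  finally show ?thesis by simp
qed

lemma stat_pt: "v \<in> V \<Longrightarrow> (\<Sum>u\<in>V. stat V E u * pt V E t u v) = stat V E v"
proof (induction t arbitrary: v)
  case 0
  have "(\<Sum>u\<in>V. stat V E u * pt V E 0 u v) = (\<Sum>u\<in>V. if u = v then stat V E v else 0)"
    by (rule sum.cong) auto
  then show ?case using 0 finite_vertices by simp
next
  case (Suc t)
  have "(\<Sum>u\<in>V. stat V E u * pt V E (Suc t) u v)
      = (\<Sum>w\<in>V. (\<Sum>u\<in>V. stat V E u * pt V E t u w) * trans V E w v)"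
    by (simp add: sum_distrib_left sum_distrib_right mult.assoc) (rule sum.swap)
  also have "\<dots> = (\<Sum>w\<in>V. stat V E w * trans V E w v)" using Suc.IH by simp
  finally show ?case using stat_trans[OF Suc.prems] by simp
qed

lemma trans_pos_edge: "E y z \<Longrightarrow> 0 < trans V E y z"
  using edge_irrefl deg_pos edge_vertices unfolding trans_def by fastforce

lemma pt_Suc_ge: "w \<in> V \<Longrightarrow> pt V E t u w * trans V E w v \<le> pt V E (Suc t) u v"
  using member_le_sum[of w V "\<lambda>w. pt V E t u w * trans V E w v"] finite_vertices
  by (simp add: mult_nonneg_nonneg pt_nonneg trans_nonneg)

lemma pt_pos_add:
  assumes v: "v \<in> V" and pos: "0 < pt V E t u v" shows "0 < pt V E (t + j) u v"
proof (induction j)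
  case (Suc j)
  have "0 < pt V E (t + j) u v * trans V E v v" using Suc edge_irrefl by (simp add: trans_def)
  also have "\<dots> \<le> pt V E (Suc (t + j)) u v" by (rule pt_Suc_ge[OF v])
  finally show ?case by simp
qed (use pos in simp)

lemma pt_pos_of_path: "E\<^sup>*\<^sup>* u v \<Longrightarrow> \<exists>l. 0 < pt V E l u v"
proof (induction rule: rtranclp.induct)
  case (rtrancl_refl a) show ?case by (rule exI[of _ 0]) simp
next
  case (rtrancl_into_rtrancl a b c)
  then obtain l where l: "0 < pt V E l a b" by blast
  have "0 < pt V E l a b * trans V E b c" using l trans_pos_edge[OF rtrancl_into_rtrancl(2)] by simp
  also have "\<dots> \<le> pt V E (Suc l) a c" using pt_Suc_ge edge_vertices rtrancl_into_rtrancl(2) by blast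
  finally show ?case by blast
qed

lemma ex_pt_pos: "\<exists>m. \<forall>u\<in>V. \<forall>v\<in>V. 0 < pt V E m u v"
proof -
  have "\<forall>x\<in>V \<times> V. \<exists>l. 0 < pt V E l (fst x) (snd x)"
    using connected pt_pos_of_path by (auto simp: connected_graph_def)
  then obtain L where L: "\<And>x. x \<in> V \<times> V \<Longrightarrow> 0 < pt V E (L x) (fst x) (snd x)"
    by (metis bchoice)
  define m where "m = Max (L ` (V \<times> V))"
  have "0 < pt V E m u v" if uv: "u \<in> V" "v \<in> V" for u v
  proof -
    have "L (u, v) \<le> m" unfolding m_def using uv finite_vertices by simp
    then have "m = L (u, v) + (m - L (u, v))" by simp
    then show ?thesis using pt_pos_add[OF uv(2)] L[of "(u, v)"] uv by (metis fst_conv snd_conv SigmaI)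
  qed
  then show ?thesis by blast
qed

lemma pt_oscillation_le:
  assumes \<epsilon>: "\<And>u w. u \<in> V \<Longrightarrow> w \<in> V \<Longrightarrow> \<epsilon> \<le> pt V E m u w"
    and v: "v \<in> V" and u: "u \<in> V" and u': "u' \<in> V"
  shows "pt V E (j * m) u v - pt V E (j * m) u' v \<le> (1 - real (card V) * \<epsilon>) ^ j"
  using u u'
proof (induction j arbitrary: u u')
  case (Suc j)
  define g where "g w = pt V E (j * m) w v" for w
  define a where "a = Min (g ` V)"
  have "a \<in> g ` V" unfolding a_def using finite_vertices vertices_nonempty by simp
  then obtain w0 where w0: "w0 \<in> V" "a = g w0" by blast
  have g: "a \<le> g w \<and> g w \<le> a + (1 - real (card V) * \<epsilon>) ^ j" if "w \<in> V" for w
  proof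
    show "a \<le> g w" unfolding a_def using finite_vertices that by simp
    show "g w \<le> a + (1 - real (card V) * \<epsilon>) ^ j"
      using Suc.IH[OF that w0(1)] unfolding w0(2) g_def by simp
  qed
  have step: "pt V E (Suc j * m) x v = (\<Sum>w\<in>V. pt V E m x w * g w)" if "x \<in> V" for x
    using pt_add[OF that, of m "j * m"] unfolding g_def by (simp add: add.commute)
  show ?case
    using Doeblin_step[OF sum_pt[OF Suc.prems(1)] sum_pt[OF Suc.prems(2)]
        \<epsilon>[OF Suc.prems(1)] \<epsilon>[OF Suc.prems(2)] g]
    unfolding step[OF Suc.prems(1)] step[OF Suc.prems(2)] by simp
qed simp

lemma pt_dist_stat_le:
  assumes v: "v \<in> V" and u: "u \<in> V"
    and osc: "\<And>u u'. u \<in> V \<Longrightarrow> u' \<in> V \<Longrightarrow> pt V E t u v - pt V E t u' v \<le> \<delta>"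
  shows "\<bar>pt V E t u v - stat V E v\<bar> \<le> \<delta>"
proof -
  have eq: "stat V E v - pt V E t u v = (\<Sum>u'\<in>V. stat V E u' * (pt V E t u' v - pt V E t u v))"
    using stat_pt[OF v, of t] sum_stat
    by (simp add: algebra_simps sum_subtractf sum_distrib_right[symmetric])
  have "(\<Sum>u'\<in>V. stat V E u' * (pt V E t u' v - pt V E t u v)) \<le> (\<Sum>u'\<in>V. stat V E u' * \<delta>)"
    using osc u by (intro sum_mono mult_left_mono stat_nonneg) auto
  moreover have "(\<Sum>u'\<in>V. stat V E u' * (- \<delta>)) \<le> (\<Sum>u'\<in>V. stat V E u' * (pt V E t u' v - pt V E t u v))"
    using osc[OF u] by (intro sum_mono mult_left_mono stat_nonneg) (auto simp: algebra_simps)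
  moreover have "(\<Sum>u'\<in>V. stat V E u' * \<delta>) = \<delta>"
    using sum_stat by (simp add: sum_distrib_right[symmetric])
  moreover have "(\<Sum>u'\<in>V. stat V E u' * (- \<delta>)) = - \<delta>"
    using sum_stat by (simp add: sum_negf sum_distrib_right[symmetric])
  ultimately show ?thesis using eq by linarith
qed

lemma ex_mixing_time: "\<exists>t. \<forall>u\<in>V. \<forall>v\<in>V. \<bar>pt V E t u v / stat V E v - 1\<bar> \<le> 1/2"
proof -
  obtain m where m: "\<forall>u\<in>V. \<forall>v\<in>V. 0 < pt V E m u v" using ex_pt_pos by blast
  define \<epsilon> where "\<epsilon> = Min ((\<lambda>(u, w). pt V E m u w) ` (V \<times> V))"
  have \<epsilon>_pos: "0 < \<epsilon>"
    unfolding \<epsilon>_def using finite_vertices vertices_nonempty m by (auto simp: Min_gr_iff)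
  have \<epsilon>_le: "\<epsilon> \<le> pt V E m u w" if "u \<in> V" "w \<in> V" for u w
    unfolding \<epsilon>_def using finite_vertices that by (intro Min_le) auto
  define \<pi>\<^sub>0 where "\<pi>\<^sub>0 = Min (stat V E ` V)"
  have \<pi>\<^sub>0: "0 < \<pi>\<^sub>0"
    unfolding \<pi>\<^sub>0_def using finite_vertices vertices_nonempty stat_pos by (auto simp: Min_gr_iff)
  have "1 - real (card V) * \<epsilon> < 1" using \<epsilon>_pos two_le_card by simp
  from real_arch_pow_inv[OF half_gt_zero[OF \<pi>\<^sub>0] this]
  obtain j where j: "(1 - real (card V) * \<epsilon>) ^ j < \<pi>\<^sub>0 / 2" by blast
  have "\<bar>pt V E (j * m) u v / stat V E v - 1\<bar> \<le> 1/2" if u: "u \<in> V" and v: "v \<in> V" for u v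
  proof -
    have s: "0 < stat V E v" by (rule stat_pos[OF v])
    have "\<pi>\<^sub>0 \<le> stat V E v" unfolding \<pi>\<^sub>0_def using finite_vertices v by simp
    moreover have "\<bar>pt V E (j * m) u v - stat V E v\<bar> \<le> (1 - real (card V) * \<epsilon>) ^ j"
      using pt_dist_stat_le[OF v u pt_oscillation_le[OF \<epsilon>_le v]] by blast
    ultimately have "\<bar>pt V E (j * m) u v - stat V E v\<bar> \<le> stat V E v / 2" using j by linarith
    then have "\<bar>pt V E (j * m) u v - stat V E v\<bar> / stat V E v \<le> 1/2"
      using s by (simp add: divide_le_eq)
    moreover have "pt V E (j * m) u v / stat V E v - 1 = (pt V E (j * m) u v - stat V E v) / stat V E v"
      using s by (simp add: field_simps)
    ultimately show ?thesis using s by simp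
  qed
  then show ?thesis by blast
qed

lemma tmix_mixes: "u \<in> V \<Longrightarrow> v \<in> V \<Longrightarrow> \<bar>pt V E (tmix V E) u v / stat V E v - 1\<bar> \<le> 1/2"
  using LeastI_ex[OF ex_mixing_time] unfolding tmix_def by blast

lemma pt_tmix_ge:
  assumes u: "u \<in> V" and v: "v \<in> V" shows "stat V E v / 2 \<le> pt V E (tmix V E) u v"
proof -
  have "1/2 \<le> pt V E (tmix V E) u v / stat V E v" using tmix_mixes[OF u v] by linarith
  then show ?thesis using stat_pos[OF v] by (simp add: field_simps)
qed

lemma pt_tmix_le:
  assumes u: "u \<in> V" and v: "v \<in> V" shows "pt V E (tmix V E) u v \<le> 3/2 * stat V E v"
proof -
  have "pt V E (tmix V E) u v / stat V E v \<le> 3/2" using tmix_mixes[OF u v] by linarith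
  then show ?thesis using stat_pos[OF v] by (simp add: field_simps)
qed

lemma tmix_pos: "0 < tmix V E"
proof (rule ccontr)
  assume "\<not> 0 < tmix V E"
  obtain v where v: "v \<in> V" using vertices_nonempty by blast
  obtain u where u: "u \<in> V" "u \<noteq> v" using ex_other_vertex[OF v] by blast
  show False using tmix_mixes[OF u(1) v] \<open>\<not> 0 < tmix V E\<close> u(2) by simp
qed

definition survival :: "'a set \<Rightarrow> nat \<Rightarrow> 'a \<Rightarrow> real" where
  "survival W k u = (\<Sum>v\<in>V. pk V E W k u v)"

lemma survival_nonneg: "0 \<le> survival W k u"
  unfolding survival_def by (auto intro!: sum_nonneg pk_nonneg)

lemma survival_Suc_le:
  assumes u: "u \<in> V" shows "survival W (Suc k) u \<le> survival W k u"
proof -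
  have "survival W (Suc k) u \<le> (\<Sum>v\<in>V. \<Sum>w\<in>V. pk V E W k u w * trans V E w v)"
    unfolding survival_def
    by (auto intro!: sum_mono sum_nonneg mult_nonneg_nonneg pk_nonneg trans_nonneg)
  also have "\<dots> = (\<Sum>w\<in>V. pk V E W k u w * (\<Sum>v\<in>V. trans V E w v))"
    by (simp add: sum_distrib_left) (rule sum.swap)
  also have "\<dots> = survival W k u" by (simp add: sum_trans survival_def)
  finally show ?thesis .
qed

lemma survival_antimono:
  assumes u: "u \<in> V" and "k \<le> l" shows "survival W l u \<le> survival W k u"
  using \<open>k \<le> l\<close> by (induction rule: dec_induct) (auto intro: order_trans[OF survival_Suc_le[OF u]])

lemma survival_le_1:
  assumes u: "u \<in> V" shows "survival W k u \<le> 1"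
proof -
  have "survival W 0 u \<le> 1" unfolding survival_def using finite_vertices u by (cases "u \<in> W") auto
  then show ?thesis using survival_antimono[OF u, of 0 k W] by simp
qed

lemma survival_add: "u \<in> V \<Longrightarrow> survival W (a + b) u = (\<Sum>w\<in>V. pk V E W a u w * survival W b w)"
  unfolding survival_def by (simp add: pk_add sum_distrib_left) (rule sum.swap)

lemma hit_before_eq: "0 < r \<Longrightarrow> hit_before V E W r u = 1 - survival W (r - 1) u"
  unfolding hit_before_def survival_def by simp

lemma Cap_le_1: "Cap V E r W \<le> 1"
proof -
  have "Cap V E r W \<le> (\<Sum>u\<in>V. stat V E u * 1)"
    unfolding Cap_def hit_before_def using survival_nonneg
    by (intro sum_mono mult_left_mono stat_nonneg) (auto simp: survival_def)
  then show ?thesis using sum_stat by simp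
qed

text \<open>After tmix steps the walk dominates half the stationary distribution, from which W is
  hit within r - 1 further steps with probability Cap_r(W).\<close>
lemma survival_mixing_block_le:
  assumes u: "u \<in> V" and r: "0 < r"
  shows "survival W (tmix V E + (r - 1)) u \<le> 1 - Cap V E r W / 2"
proof -
  let ?T = "tmix V E" and ?s = "\<lambda>w. survival W (r - 1) w"
  have "survival W (?T + (r - 1)) u = (\<Sum>w\<in>V. pk V E W ?T u w * ?s w)"
    by (rule survival_add[OF u])
  also have "\<dots> \<le> (\<Sum>w\<in>V. pt V E ?T u w * ?s w)"
    by (intro sum_mono mult_right_mono pk_le_pt survival_nonneg)
  also have "\<dots> = 1 - (\<Sum>w\<in>V. pt V E ?T u w * (1 - ?s w))"
    using sum_pt[OF u] by (simp add: algebra_simps sum_subtractf)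
  also have "\<dots> \<le> 1 - (\<Sum>w\<in>V. stat V E w / 2 * (1 - ?s w))"
    using pt_tmix_ge[OF u] survival_le_1 by (intro diff_left_mono sum_mono mult_right_mono) auto
  also have "(\<Sum>w\<in>V. stat V E w / 2 * (1 - ?s w)) = Cap V E r W / 2"
    unfolding Cap_def using hit_before_eq[OF r] by (simp add: sum_divide_distrib)
  finally show ?thesis .
qed

lemma survival_blocks_le:
  assumes r: "0 < r" and u: "u \<in> V"
  shows "survival W (j * (tmix V E + r)) u \<le> (1 - Cap V E r W / 2) ^ j"
  using u
proof (induction j arbitrary: u)
  case 0 then show ?case using survival_le_1 by simp
next
  case (Suc j)
  let ?B = "tmix V E + r" and ?\<rho> = "1 - Cap V E r W / 2"
  have "survival W (Suc j * ?B) u \<le> survival W (j * ?B + (tmix V E + (r - 1))) u"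
    by (rule survival_antimono[OF Suc.prems]) (use r in simp)
  also have "\<dots> = (\<Sum>w\<in>V. pk V E W (j * ?B) u w * survival W (tmix V E + (r - 1)) w)"
    by (rule survival_add[OF Suc.prems])
  also have "\<dots> \<le> (\<Sum>w\<in>V. pk V E W (j * ?B) u w * ?\<rho>)"
    using survival_mixing_block_le r by (intro sum_mono mult_left_mono pk_nonneg) auto
  also have "\<dots> = survival W (j * ?B) u * ?\<rho>"
    unfolding survival_def by (simp add: sum_distrib_right)
  also have "\<dots> \<le> ?\<rho> ^ j * ?\<rho>"
    using Suc Cap_le_1[of r W] by (intro mult_right_mono) auto
  finally show ?case by (simp add: mult.commute)
qed

lemma survival_decay:
  assumes r: "0 < r" and u: "u \<in> V"
  shows "survival W k u \<le> (1 - Cap V E r W / 2) ^ (k div (tmix V E + r))"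
proof -
  let ?B = "tmix V E + r"
  have "survival W k u \<le> survival W (k div ?B * ?B) u"
    by (rule survival_antimono[OF u]) (simp add: div_times_less_eq_dividend)
  also have "\<dots> \<le> (1 - Cap V E r W / 2) ^ (k div ?B)"
    by (rule survival_blocks_le[OF r u])
  finally show ?thesis .
qed

lemma pk_diag_after_mixing_le:
  assumes v: "v \<in> V"
  shows "pk V E W (k + tmix V E) v v \<le> 3/2 * stat V E v * survival W k v"
proof -
  have "pk V E W (k + tmix V E) v v = (\<Sum>w\<in>V. pk V E W k v w * pk V E W (tmix V E) w v)"
    by (rule pk_add[OF v])
  also have "\<dots> \<le> (\<Sum>w\<in>V. pk V E W k v w * (3/2 * stat V E v))"
    using pk_le_pt pt_tmix_le[OF _ v] order_trans by (intro sum_mono mult_left_mono pk_nonneg) blast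
  also have "\<dots> = (\<Sum>w\<in>V. pk V E W k v w) * (3/2 * stat V E v)"
    by (rule sum_distrib_right[symmetric])
  also have "\<dots> = 3/2 * stat V E v * survival W k v"
    unfolding survival_def by simp
  finally show ?thesis .
qed

lemma stat_le_degree_ratio:
  assumes D: "real (max_deg V E) / real (min_deg V E) \<le> D" and v: "v \<in> V"
  shows "stat V E v \<le> D / real (card V)"
proof -
  have "min_deg V E \<in> deg V E ` V"
    unfolding min_deg_def using finite_vertices vertices_nonempty by simp
  then have min_pos: "0 < real (min_deg V E)" using deg_pos by auto
  have "real (deg V E v) \<le> real (max_deg V E)"
    unfolding max_deg_def using finite_vertices v by simp
  moreover have "real (card V) * real (min_deg V E) \<le> (\<Sum>w\<in>V. real (deg V E w))"
    using sum_mono[of V "\<lambda>_. real (min_deg V E)" "\<lambda>w. real (deg V E w)"] finite_vertices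
    by (simp add: min_deg_def)
  moreover have n: "0 < real (card V)" using two_le_card by simp
  ultimately have "stat V E v \<le> real (max_deg V E) / (real (card V) * real (min_deg V E))"
    unfolding stat_def using min_pos by (intro frac_le) auto
  also have "\<dots> \<le> D / real (card V)"
    using divide_right_mono[OF D, of "real (card V)"] n by (simp add: mult.commute)
  finally show ?thesis .
qed

lemma Max_pk_diag_nonneg: "0 \<le> Max ((\<lambda>v. pk V E W t v v) ` V)"
proof -
  obtain v where v: "v \<in> V" using vertices_nonempty by blast
  have "pk V E W t v v \<le> Max ((\<lambda>v. pk V E W t v v) ` V)" using finite_vertices v by simp
  then show ?thesis using pk_nonneg order_trans by blast
qed

lemma sum_Max_pk_diag_le_bubble:
  "(\<Sum>t<tmix V E + 1. real (t + 1) * Max ((\<lambda>v. pk V E W t v v) ` V)) \<le> bubble V E"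
proof -
  have "Max ((\<lambda>v. pk V E W t v v) ` V) \<le> Max ((\<lambda>v. pt V E t v v) ` V)" for t
  proof (rule Max.boundedI)
    fix x assume "x \<in> (\<lambda>v. pk V E W t v v) ` V"
    then obtain v where v: "v \<in> V" and x: "x = pk V E W t v v" by blast
    have "pt V E t v v \<le> Max ((\<lambda>v. pt V E t v v) ` V)" using finite_vertices v by simp
    then show "x \<le> Max ((\<lambda>v. pt V E t v v) ` V)" unfolding x by (rule order_trans[OF pk_le_pt])
  qed (use finite_vertices vertices_nonempty in auto)
  then have "(\<Sum>t<tmix V E + 1. real (t + 1) * Max ((\<lambda>v. pk V E W t v v) ` V))
      \<le> (\<Sum>t<tmix V E + 1. real (t + 1) * Max ((\<lambda>v. pt V E t v v) ` V))"
    by (intro sum_mono mult_left_mono) auto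
  also have "\<dots> = bubble V E"
    unfolding bubble_def by (simp add: atLeast0AtMost lessThan_Suc_atMost)
  finally show ?thesis .
qed

lemma Max_pk_diag_decay:
  assumes r: "0 < r" and D: "real (max_deg V E) / real (min_deg V E) \<le> D"
  shows "Max ((\<lambda>v. pk V E W (k + tmix V E) v v) ` V)
    \<le> 3/2 * D / real (card V) * (1 - Cap V E r W / 2) ^ (k div (tmix V E + r))"
proof (rule Max.boundedI)
  show "x \<le> 3/2 * D / real (card V) * (1 - Cap V E r W / 2) ^ (k div (tmix V E + r))"
    if x_in: "x \<in> (\<lambda>v. pk V E W (k + tmix V E) v v) ` V" for x
  proof -
    obtain v where v: "v \<in> V" and x: "x = pk V E W (k + tmix V E) v v" using x_in by blast
    have "0 \<le> D / real (card V)" using order_trans[OF stat_nonneg stat_le_degree_ratio[OF D v]] .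
    have "x \<le> 3/2 * stat V E v * survival W k v" unfolding x by (rule pk_diag_after_mixing_le[OF v])
    also have "\<dots> \<le> 3/2 * (D / real (card V)) * (1 - Cap V E r W / 2) ^ (k div (tmix V E + r))"
      using stat_le_degree_ratio[OF D v] survival_decay[OF r v] survival_nonneg stat_nonneg
        \<open>0 \<le> D / real (card V)\<close>
      by (intro mult_mono mult_left_mono) auto
    finally show ?thesis by simp
  qed
qed (use finite_vertices vertices_nonempty in auto)

lemma weighted_Max_pk_diag_tail_le:
  assumes r: "0 < r" and D: "real (max_deg V E) / real (min_deg V E) \<le> D"
    and cap: "0 < Cap V E r W"
  shows "real (tmix V E + 1 + k + 1) * Max ((\<lambda>v. pk V E W (tmix V E + 1 + k) v v) ` V)
    \<le> (real (k div (tmix V E + r)) + 2) * real (tmix V E + r) * (3/2 * D / real (card V))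
        * (1 - Cap V E r W / 2) ^ (k div (tmix V E + r))"
proof -
  define T B c \<rho> where "T = tmix V E" and "B = tmix V E + r"
    and "c = 3/2 * D / real (card V)" and "\<rho> = 1 - Cap V E r W / 2"
  have \<rho>: "0 \<le> \<rho>" "\<rho> < 1" using Cap_le_1[of r W] cap unfolding \<rho>_def by auto
  have "0 \<le> real (max_deg V E) / real (min_deg V E)" by simp
  then have "0 \<le> D" using D by linarith
  then have c: "0 \<le> c" unfolding c_def by simp
  have B: "0 < B" "T + 1 \<le> B" using r unfolding B_def T_def by auto
  have idx: "T + 1 + k = Suc k + T" by simp
  have "Max ((\<lambda>v. pk V E W (T + 1 + k) v v) ` V) \<le> c * \<rho> ^ (Suc k div B)"
    unfolding idx using Max_pk_diag_decay[OF r D, of W "Suc k"]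
    by (simp only: T_def B_def c_def \<rho>_def)
  also have "\<dots> \<le> c * \<rho> ^ (k div B)"
    using \<rho> c by (intro mult_left_mono power_decreasing div_le_mono) auto
  finally have Max_le: "Max ((\<lambda>v. pk V E W (T + 1 + k) v v) ` V) \<le> c * \<rho> ^ (k div B)" .
  have "k mod B < B" using B by simp
  then have "k + 1 \<le> k div B * B + B" using div_mult_mod_eq[of k B] by linarith
  then have "T + 1 + k + 1 \<le> (k div B + 2) * B"
    using B(2) by (simp only: add_mult_distrib)
  then have time_le: "real (T + 1 + k + 1) \<le> (real (k div B) + 2) * real B"
    by (metis of_nat_add of_nat_le_iff of_nat_mult of_nat_numeral)
  have "real (T + 1 + k + 1) * Max ((\<lambda>v. pk V E W (T + 1 + k) v v) ` V)
      \<le> ((real (k div B) + 2) * real B) * (c * \<rho> ^ (k div B))"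
    by (intro mult_mono time_le Max_le Max_pk_diag_nonneg) simp
  then show ?thesis unfolding B_def c_def \<rho>_def T_def by (simp add: mult.assoc)
qed

lemma bubbleW_partial_sum_le:
  assumes r: "0 < r" and D: "real (max_deg V E) / real (min_deg V E) \<le> D"
    and cap: "0 < Cap V E r W"
  shows "(\<Sum>t<K. real (t + 1) * Max ((\<lambda>v. pk V E W t v v) ` V))
    \<le> bubble V E + 3/2 * D / real (card V) * real (tmix V E + r)^2
        * (1 / (Cap V E r W / 2)^2 + 1 / (Cap V E r W / 2))"
proof -
  define T B c \<rho> where "T = tmix V E" and "B = tmix V E + r"
    and "c = 3/2 * D / real (card V)" and "\<rho> = 1 - Cap V E r W / 2"
  define f where "f t = real (t + 1) * Max ((\<lambda>v. pk V E W t v v) ` V)" for t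
  have f_nonneg: "0 \<le> f t" for t unfolding f_def using Max_pk_diag_nonneg by simp
  have \<rho>: "0 \<le> \<rho>" "\<rho> < 1" using Cap_le_1[of r W] cap unfolding \<rho>_def by auto
  have "0 \<le> real (max_deg V E) / real (min_deg V E)" by simp
  then have "0 \<le> D" using D by linarith
  then have c: "0 \<le> c" unfolding c_def by simp
  have B: "0 < B" using r unfolding B_def by simp
  have tail: "f (T + 1 + k) \<le> (real (k div B) + 2) * real B * c * \<rho> ^ (k div B)" for k
    unfolding f_def T_def B_def c_def \<rho>_def by (rule weighted_Max_pk_diag_tail_le[OF r D cap])
  have "(\<Sum>k<K. f (T + 1 + k)) \<le> real B * (\<Sum>j<K. (real j + 2) * real B * c * \<rho> ^ j)"
    by (rule sum_le_block_sum[where h = "\<lambda>k. f (T + 1 + k)", OF f_nonneg tail B])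
  also have "\<dots> = real B * real B * c * (\<Sum>j<K. (real j + 2) * \<rho> ^ j)"
    by (simp add: sum_distrib_left algebra_simps)
  also have "\<dots> \<le> real B * real B * c * (1 / (1 - \<rho>)^2 + 1 / (1 - \<rho>))"
    using c by (intro mult_left_mono sum_add_two_mult_power_le[OF \<rho>]) auto
  finally have tail_sum: "(\<Sum>k<K. f (T + 1 + k)) \<le> real B * real B * c * (1 / (1 - \<rho>)^2 + 1 / (1 - \<rho>))" .
  have "(\<Sum>t<K. f t) \<le> (\<Sum>t<T + 1 + K. f t)"
    using f_nonneg by (intro sum_mono2) auto
  also have "\<dots> = (\<Sum>t<T + 1. f t) + (\<Sum>k<K. f (T + 1 + k))"
    by (induction K) (auto simp: add.assoc[symmetric])
  also have "(\<Sum>t<T + 1. f t) \<le> bubble V E"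
    unfolding f_def T_def by (rule sum_Max_pk_diag_le_bubble)
  finally show ?thesis
    using tail_sum unfolding f_def B_def c_def \<rho>_def by (simp add: power2_eq_square algebra_simps)
qed

lemma bubbleW_le:
  assumes r: "0 < r" and D: "real (max_deg V E) / real (min_deg V E) \<le> D"
    and cap: "0 < Cap V E r W"
  shows "bubbleW V E W \<le> ennreal (bubble V E + 3/2 * D / real (card V) * real (tmix V E + r)^2
        * (1 / (Cap V E r W / 2)^2 + 1 / (Cap V E r W / 2)))"
  unfolding bubbleW_def
  by (rule suminf_ennreal_le) (use bubbleW_partial_sum_le[OF r D cap] Max_pk_diag_nonneg in auto)

end

lemma capacity_term_le:
  fixes D n r T cap chi :: real
  assumes D: "0 \<le> D" and n: "0 < n" and r: "0 < r" and T: "0 \<le> T" "T \<le> r" and chi: "0 < chi"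
    and cap: "chi * r / sqrt n \<le> cap" and r_small: "r \<le> sqrt n / 12"
  shows "3/2 * D / n * (T + r)^2 * (1 / (cap/2)^2 + 1 / (cap/2)) \<le> 2 * D + 36 * D / chi^2"
proof -
  define s k where "s = sqrt n" and "k = chi * r / s"
  have s: "0 < s" "n = s^2" using n unfolding s_def by auto
  have k: "0 < k" "k \<le> cap" using chi r s cap unfolding k_def s_def by auto
  have "(T + r)^2 \<le> (2 * r)^2" using T by (intro power_mono) auto
  moreover have "1 / (cap/2)^2 \<le> 4 / k^2" and "1 / (cap/2) \<le> 2 / k"
    using k by (auto simp: field_simps power2_eq_square intro!: mult_mono)
  ultimately have "3/2 * D / n * (T + r)^2 * (1 / (cap/2)^2 + 1 / (cap/2))
      \<le> 3/2 * D / n * (2 * r)^2 * (4 / k^2 + 2 / k)"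
    using D n k by (intro mult_mono add_mono mult_left_mono) auto
  also have "\<dots> = 24 * D / chi^2 + 12 * D * (r / s) / chi"
    unfolding s(2) k_def using s r chi by (simp add: field_simps power2_eq_square)
  also have "12 * D * (r / s) / chi \<le> D / chi"
    using r_small s D chi unfolding s_def by (auto simp: field_simps intro!: mult_left_mono)
  also have "D / chi \<le> D / 2 + D / (2 * chi^2)"
  proof -
    have "2 * chi \<le> 1 + chi^2" using sum_squares_bound[of chi 1] by (simp add: power2_eq_square)
    then have "1 / chi \<le> 1/2 + 1 / (2 * chi^2)" using chi by (simp add: field_simps power2_eq_square)
    then have "D * (1 / chi) \<le> D * (1/2 + 1 / (2 * chi^2))" by (rule mult_left_mono[OF _ D])
    then show ?thesis by (simp add: distrib_left)
  qed
  also have "24 * D / chi^2 + (D / 2 + D / (2 * chi^2)) = D / 2 + 49 * D / (2 * chi^2)"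
    by (simp add: field_simps)
  also have "49 * D / (2 * chi^2) \<le> 36 * D / chi^2"
    using D chi by (simp add: field_simps)
  finally show ?thesis using D by linarith
qed

lemma run_time_ge:
  assumes "0 < \<alpha>" "1 \<le> n" and T: "real T \<le> real n powr (1/2 - \<alpha>)"
  shows "T \<le> run_time n \<alpha>"
proof -
  have "real n powr (1/2 - \<alpha>) \<le> real n powr (1/2 - \<alpha>/3)"
    using assms by (intro powr_mono) auto
  then have "int T \<le> \<lfloor>real n powr (1/2 - \<alpha>/3)\<rfloor>" using T by (simp add: le_floor_iff)
  also have "\<dots> \<le> round (real n powr (1/2 - \<alpha>/3))" by (rule floor_le_round)
  finally show ?thesis unfolding run_time_def by simp
qed

lemma run_time_le_sqrt:
  assumes \<alpha>: "0 < \<alpha>" and n: "576 \<le> n" "24 powr (3/\<alpha>) \<le> real n"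
  shows "real (run_time n \<alpha>) \<le> sqrt (real n) / 12"
proof -
  define x where "x = real n powr (1/2 - \<alpha>/3)"
  have "(24 :: real) = (24 powr (3/\<alpha>)) powr (\<alpha>/3)"
    using \<alpha> by (simp add: powr_powr)
  also have "\<dots> \<le> real n powr (\<alpha>/3)"
    using \<alpha> n by (intro powr_mono2) auto
  finally have "sqrt (real n) / real n powr (\<alpha>/3) \<le> sqrt (real n) / 24"
    using n by (intro divide_left_mono) auto
  moreover have "x = sqrt (real n) / real n powr (\<alpha>/3)"
    unfolding x_def by (simp add: powr_diff powr_half_sqrt)
  ultimately have "x \<le> sqrt (real n) / 24" by simp
  moreover have "24 \<le> sqrt (real n)"
    using real_sqrt_le_mono[of "24^2" "real n"] n by simp
  moreover have "real (run_time n \<alpha>) \<le> x + 1/2"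
  proof -
    have "0 \<le> round x" unfolding x_def round_def by simp
    then show ?thesis unfolding run_time_def x_def[symmetric] using of_int_round_le[of x] by simp
  qed
  ultimately show ?thesis by linarith
qed

theorem mainTheorem20:
  fixes D \<alpha> \<theta> :: real
  assumes "D > 0" and "\<alpha> > 0" and "\<theta> > 0"
  shows "\<exists>N::nat. \<forall>(V::nat set) (E::nat \<Rightarrow> nat \<Rightarrow> bool).
     simple_graph V E \<and> connected_graph V E \<and> card V \<ge> N
     \<and> real (max_deg V E) / real (min_deg V E) \<le> D
     \<and> real (tmix V E) \<le> real (card V) powr (1/2 - \<alpha>)
     \<and> bubble V E \<le> \<theta>
     \<longrightarrow> (\<forall>chi::real. \<forall>W. chi > 0 \<and> W \<subseteq> V \<and> W \<noteq> {}
            \<and> Cap V E (run_time (card V) \<alpha>) W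
                \<ge> chi * real (run_time (card V) \<alpha>) / sqrt (real (card V))
          \<longrightarrow> bubbleW V E W \<le> ennreal (\<theta> + 2 * D + 36 * D / chi\<^sup>2))"
proof (intro exI[of _ "max 576 (nat \<lceil>24 powr (3/\<alpha>)\<rceil>)"] allI impI, elim conjE)
  fix V :: "nat set" and E chi W
  let ?n = "card V" and ?r = "run_time (card V) \<alpha>"
  assume simple: "simple_graph V E" and connected: "connected_graph V E"
    and n: "max 576 (nat \<lceil>24 powr (3/\<alpha>)\<rceil>) \<le> ?n"
    and D: "real (max_deg V E) / real (min_deg V E) \<le> D"
    and mix: "real (tmix V E) \<le> real ?n powr (1/2 - \<alpha>)" and esc: "bubble V E \<le> \<theta>"
    and chi: "0 < chi" and cap: "chi * real ?r / sqrt (real ?n) \<le> Cap V E ?r W"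
  have n576: "576 \<le> ?n" and n\<alpha>: "24 powr (3/\<alpha>) \<le> real ?n"
    using n by (auto simp: nat_le_iff ceiling_le_iff)
  interpret lazy_walk_graph V E using simple connected n576 by unfold_locales auto
  have Tr: "tmix V E \<le> ?r" using run_time_ge[OF \<open>\<alpha> > 0\<close> _ mix] n576 by simp
  then have r: "0 < ?r" using tmix_pos by simp
  have "0 < chi * real ?r / sqrt (real ?n)" using chi r n576 by simp
  then have cap_pos: "0 < Cap V E ?r W" using cap by linarith
  have "3/2 * D / real ?n * (real (tmix V E) + real ?r)^2
        * (1 / (Cap V E ?r W / 2)^2 + 1 / (Cap V E ?r W / 2)) \<le> 2 * D + 36 * D / chi\<^sup>2"
    using \<open>D > 0\<close> n576 r Tr
    by (intro capacity_term_le[OF _ _ _ _ _ chi cap run_time_le_sqrt[OF \<open>\<alpha> > 0\<close> n576 n\<alpha>]]) auto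
  then have "bubble V E + 3/2 * D / real ?n * real (tmix V E + ?r)^2
        * (1 / (Cap V E ?r W / 2)^2 + 1 / (Cap V E ?r W / 2)) \<le> \<theta> + 2 * D + 36 * D / chi\<^sup>2"
    using esc by simp
  then show "bubbleW V E W \<le> ennreal (\<theta> + 2 * D + 36 * D / chi\<^sup>2)"
    using bubbleW_le[OF r D cap_pos] order_trans ennreal_leI by blast
qed

end
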